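(* Let $p,q\in\mathbb C$ with $p\neq0$, and for $\ell\in\frac12\mathbb N_0$ and $m\in\{-\ell,-\ell+1,\dots,\ell\}$ let $\Delta(\ell)_m:=-m^2+|q|^2-|p|^2-2im\,\mathrm{Re}(q)$, and $\langle\ell\rangle:=\sqrt{1+\ell(\ell+1)}$. Then $\Delta(\ell)_m\neq0$ for all $\ell\in\frac12\mathbb N_0$ and all $m\in\{-\ell,\dots,\ell\}$ if and only if one of the following holds: 1. $|p|>|q|$; 2. $|p|<|q|$ and $\mathrm{Re}(q)\neq0$; 3. there exists $M>0$ such that for all $\ell\in\frac12\mathbb N_0$ with $\langle\ell\rangle\ge M$ one has $\big|m^2-(|q|^2-|p|^2)\big|\ge\langle\ell\rangle^{-M}$ for all $m\in\{-\ell,\dots,\ell\}$.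
   Context: Here $m$ ranges over $-\ell\le m\le\ell$ with $\ell-m\in\mathbb N_0$; these quantities arise for the operator $Pu=\partial_0u-qu-p\bar u$ on $\mathrm{SU}(2)$, with $\langle\ell\rangle$ the eigenvalue of $(I-\mathcal L)^{1/2}$ on the matrix entries of the representation $\mathsf t^\ell$. *)

theory Defs
  imports Complex_Main
begin

text \<open>Half-integers l in (1/2) N_0 are encoded by n :: nat via l = n / 2.\<close>
definition half_level :: "nat \<Rightarrow> real" where
  "half_level n = real n / 2"

definition m_range :: "nat \<Rightarrow> real set" where
  "m_range n = {real k - half_level n | k. k \<le> n}"

text \<open>Delta(l)_m = -m^2 + |q|^2 - |p|^2 - 2 i m Re(q) (independent of l).\<close>
definition Delta :: "complex \<Rightarrow> complex \<Rightarrow> real \<Rightarrow> complex" where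
  "Delta p q m = - complex_of_real (m^2) + complex_of_real ((cmod q)^2 - (cmod p)^2)
                 - 2 * \<i> * complex_of_real m * complex_of_real (Re q)"

definition jbracket :: "nat \<Rightarrow> real" where
  "jbracket n = sqrt (1 + half_level n * (half_level n + 1))"

end

theory Submission
  imports Defs
begin

text \<open>
  \<open>Delta p q m\<close> vanishes iff \<open>m\<^sup>2 = c\<close> and \<open>m Re q = 0\<close>, where \<open>c = |q|\<^sup>2 - |p|\<^sup>2\<close>.
  If \<open>Re q \<noteq> 0\<close> this forces \<open>m = 0 = c\<close>, which happens exactly when \<open>|p| = |q|\<close>.
  If \<open>Re q = 0\<close> the condition is that \<open>c\<close> is not the square of a half-integer; since these
  squares are discrete and tend to infinity, that already gives a uniform gap \<open>|m\<^sup>2 - c| \<ge> \<delta>\<close>,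
  hence the Diophantine condition 3. Conversely, condition 3 excludes a root \<open>m\<close>, because \<open>m\<close>
  reappears in the index sets of all levels \<open>n + 2t\<close>, where the bound becomes positive.
\<close>

definition diophantine_gap :: "real \<Rightarrow> bool" where
  "diophantine_gap c \<longleftrightarrow> (\<exists>M>0. \<forall>n. jbracket n \<ge> M \<longrightarrow>
      (\<forall>m\<in>m_range n. \<bar>m\<^sup>2 - c\<bar> \<ge> jbracket n powr (-M)))"

lemma Delta_eq_0_iff:
  "Delta p q m = 0 \<longleftrightarrow> m\<^sup>2 = (cmod q)\<^sup>2 - (cmod p)\<^sup>2 \<and> m * Re q = 0"
  unfolding Delta_def by (auto simp: complex_eq_iff)

lemma mem_m_range_iff: "m \<in> m_range n \<longleftrightarrow> (\<exists>k\<le>n. m = real k - real n / 2)"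
  unfolding m_range_def half_level_def by auto

lemma half_mem_m_range: "real n / 2 \<in> m_range n"
  unfolding mem_m_range_iff by auto

lemma m_range_subset_add_even: "m_range n \<subseteq> m_range (n + 2 * t)"
proof
  fix m assume "m \<in> m_range n"
  then obtain k where "k \<le> n" "m = real k - real n / 2"
    by (auto simp: mem_m_range_iff)
  then show "m \<in> m_range (n + 2 * t)"
    unfolding mem_m_range_iff by (intro exI[of _ "k + t"]) (auto simp: field_simps)
qed

lemma abs_mem_m_range_half_nat:
  assumes "m \<in> m_range n"
  obtains j :: nat where "\<bar>m\<bar> = real j / 2"
proof -
  from assms obtain k where k: "k \<le> n" "m = real k - real n / 2"
    by (auto simp: mem_m_range_iff)
  have "\<bar>m\<bar> = real (if n \<le> 2 * k then 2 * k - n else n - 2 * k) / 2"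
    using k by auto
  then show ?thesis by (rule that)
qed

lemma jbracket_pos: "jbracket n > 0"
  unfolding jbracket_def half_level_def by (simp add: add_pos_nonneg)

lemma jbracket_ge_half: "jbracket n \<ge> real n / 2"
proof -
  have "(real n / 2)\<^sup>2 \<le> 1 + real n / 2 * (real n / 2 + 1)"
    by (simp add: power2_eq_square algebra_simps)
  then have "sqrt ((real n / 2)\<^sup>2) \<le> jbracket n"
    unfolding jbracket_def half_level_def by (rule real_sqrt_le_mono)
  then show ?thesis by simp
qed

lemma half_nat_squares_separated:
  fixes c :: real
  assumes "\<And>j::nat. (real j / 2)\<^sup>2 \<noteq> c"
  obtains \<delta> where "\<delta> > 0" "\<And>j::nat. \<delta> \<le> \<bar>(real j / 2)\<^sup>2 - c\<bar>"
proof -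
  define N where "N = nat \<lceil>2 * sqrt \<bar>c\<bar> + 2\<rceil>"
  define \<delta> where "\<delta> = min 1 (Min ((\<lambda>j::nat. \<bar>(real j / 2)\<^sup>2 - c\<bar>) ` {..N}))"
  have "Min ((\<lambda>j::nat. \<bar>(real j / 2)\<^sup>2 - c\<bar>) ` {..N}) > 0"
    using assms by (subst Min_gr_iff) auto
  then have "\<delta> > 0"
    unfolding \<delta>_def by simp
  moreover have "\<delta> \<le> \<bar>(real j / 2)\<^sup>2 - c\<bar>" for j :: nat
  proof (cases "j \<le> N")
    case True
    then show ?thesis unfolding \<delta>_def by (simp add: min.coboundedI2)
  next
    case False
    then have "real j / 2 \<ge> sqrt \<bar>c\<bar> + 1"
      unfolding N_def by linarith
    then have "(real j / 2)\<^sup>2 \<ge> (sqrt \<bar>c\<bar> + 1)\<^sup>2"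
      by (rule power_mono) simp
    moreover have "(sqrt \<bar>c\<bar> + 1)\<^sup>2 \<ge> \<bar>c\<bar> + 1"
      by (simp add: power2_eq_square algebra_simps)
    ultimately show ?thesis unfolding \<delta>_def by linarith
  qed
  ultimately show ?thesis by (rule that)
qed

lemma diophantine_gap_if_uniform_gap:
  assumes "\<delta> > 0" and gap: "\<And>n m. m \<in> m_range n \<Longrightarrow> \<delta> \<le> \<bar>m\<^sup>2 - c\<bar>"
  shows "diophantine_gap c"
proof -
  define M where "M = max 1 (1 / \<delta>)"
  have "jbracket n powr (-M) \<le> \<bar>m\<^sup>2 - c\<bar>"
    if "jbracket n \<ge> M" "m \<in> m_range n" for n m
  proof -
    have "jbracket n \<ge> 1" "jbracket n \<ge> 1 / \<delta>"
      using that(1) unfolding M_def by linarith+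
    have "jbracket n powr (-M) \<le> jbracket n powr (-1)"
      using \<open>jbracket n \<ge> 1\<close> by (intro powr_mono) (auto simp: M_def)
    also have "\<dots> = 1 / jbracket n"
      using jbracket_pos[of n] by (simp add: powr_minus divide_inverse)
    also have "\<dots> \<le> \<delta>"
      using \<open>jbracket n \<ge> 1 / \<delta>\<close> \<open>\<delta> > 0\<close> jbracket_pos[of n]
      by (simp add: field_simps)
    also have "\<dots> \<le> \<bar>m\<^sup>2 - c\<bar>"
      using gap[OF that(2)] .
    finally show ?thesis .
  qed
  moreover have "M > 0" unfolding M_def by simp
  ultimately show ?thesis unfolding diophantine_gap_def by blast
qed

lemma diophantine_gap_imp_no_root:
  assumes "diophantine_gap c" and "m \<in> m_range n"
  shows "m\<^sup>2 \<noteq> c"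
proof -
  obtain M where "M > 0" and M: "\<And>n m. jbracket n \<ge> M \<Longrightarrow> m \<in> m_range n
      \<Longrightarrow> \<bar>m\<^sup>2 - c\<bar> \<ge> jbracket n powr (-M)"
    using assms(1) unfolding diophantine_gap_def by blast
  define n' where "n' = n + 2 * nat \<lceil>M\<rceil>"
  have "real (nat \<lceil>M\<rceil>) \<ge> M"
    by linarith
  then have "real n' / 2 \<ge> M"
    unfolding n'_def by simp
  then have "jbracket n' \<ge> M"
    using jbracket_ge_half[of n'] by linarith
  moreover have "m \<in> m_range n'"
    using assms(2) m_range_subset_add_even unfolding n'_def by blast
  ultimately have "\<bar>m\<^sup>2 - c\<bar> \<ge> jbracket n' powr (-M)"
    by (rule M)
  moreover have "jbracket n' powr (-M) > 0"
    using jbracket_pos[of n'] by simp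
  ultimately show ?thesis by auto
qed

lemma diophantine_gap_iff_no_root:
  "diophantine_gap c \<longleftrightarrow> (\<forall>n. \<forall>m\<in>m_range n. m\<^sup>2 \<noteq> c)"
proof
  assume no_root: "\<forall>n. \<forall>m\<in>m_range n. m\<^sup>2 \<noteq> c"
  have half_not_root: "(real j / 2)\<^sup>2 \<noteq> c" for j :: nat
    using no_root half_mem_m_range by blast
  obtain \<delta> where "\<delta> > 0" and \<delta>: "\<And>j::nat. \<delta> \<le> \<bar>(real j / 2)\<^sup>2 - c\<bar>"
    using half_nat_squares_separated[OF half_not_root] by blast
  have "\<delta> \<le> \<bar>m\<^sup>2 - c\<bar>" if m: "m \<in> m_range n" for n m
  proof -
    obtain j :: nat where "\<bar>m\<bar> = real j / 2"
      using m by (rule abs_mem_m_range_half_nat)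
    then have "m\<^sup>2 = (real j / 2)\<^sup>2"
      by (metis power2_abs)
    then show ?thesis
      using \<delta>[of j] by simp
  qed
  with \<open>\<delta> > 0\<close> show "diophantine_gap c"
    by (rule diophantine_gap_if_uniform_gap)
next
  assume "diophantine_gap c"
  then show "\<forall>n. \<forall>m\<in>m_range n. m\<^sup>2 \<noteq> c"
    using diophantine_gap_imp_no_root by blast
qed

theorem proposition5p2:
  fixes p q :: complex
  assumes "p \<noteq> 0"
  shows "(\<forall>n::nat. \<forall>m\<in>m_range n. Delta p q m \<noteq> 0) \<longleftrightarrow>
         (cmod p > cmod q
          \<or> (cmod p < cmod q \<and> Re q \<noteq> 0)
          \<or> (\<exists>M>0. \<forall>n::nat. jbracket n \<ge> M \<longrightarrow>
                (\<forall>m\<in>m_range n. \<bar>m^2 - ((cmod q)^2 - (cmod p)^2)\<bar> \<ge> jbracket n powr (-M))))"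
proof -
  define c where "c = (cmod q)\<^sup>2 - (cmod p)\<^sup>2"
  define no_root where "no_root \<longleftrightarrow> (\<forall>n. \<forall>m\<in>m_range n. m\<^sup>2 \<noteq> c)"
  have Delta_iff: "(\<forall>n. \<forall>m\<in>m_range n. Delta p q m \<noteq> 0) \<longleftrightarrow>
      (\<forall>n. \<forall>m\<in>m_range n. \<not> (m\<^sup>2 = c \<and> m * Re q = 0))"
    unfolding Delta_eq_0_iff c_def by (rule refl)
  have gap_iff: "(\<exists>M>0. \<forall>n. jbracket n \<ge> M \<longrightarrow>
      (\<forall>m\<in>m_range n. \<bar>m^2 - c\<bar> \<ge> jbracket n powr (-M))) \<longleftrightarrow> no_root"
    using diophantine_gap_iff_no_root[of c] by (simp only: diophantine_gap_def no_root_def)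
  have "(cmod p)\<^sup>2 \<le> (cmod q)\<^sup>2 \<longleftrightarrow> cmod p \<le> cmod q"
    and "(cmod p)\<^sup>2 = (cmod q)\<^sup>2 \<longleftrightarrow> cmod p = cmod q"
    by simp_all
  then have "c < 0 \<longleftrightarrow> cmod p > cmod q" and "c = 0 \<longleftrightarrow> cmod p = cmod q"
    unfolding c_def by linarith+
  moreover have "c < 0 \<Longrightarrow> no_root"
    unfolding no_root_def by (metis not_less zero_le_power2)
  moreover have "0 \<in> m_range 0"
    using half_mem_m_range[of 0] by simp
  moreover have "no_root \<Longrightarrow> c \<noteq> 0"
    using \<open>0 \<in> m_range 0\<close> unfolding no_root_def by (metis zero_power2)
  ultimately show ?thesis
    unfolding Delta_iff c_def[symmetric] gap_iff
    by (cases "Re q = 0") (auto simp: no_root_def)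
qed

end
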